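(* Let $n,m\ge 1$, let $R\in\mathbb{R}^{2n\times 2n}$ be symmetric, $C\in\mathbb{R}^{2m\times 2n}$, and $\Sigma\in\mathbb{R}^{2m\times 2m}$ real symplectic. Set $A=\mathbb{J}_{2n}R-\tfrac12 C^{\sharp}C$ and $B=-C^{\sharp}\Sigma$, and define $$\mathcal{C}=(B\; AB\;\cdots\;A^{2n-1}B),\qquad \mathcal{O}=\begin{pmatrix}C\\ CA\\ \vdots\\ CA^{2n-1}\end{pmatrix},$$ $$\tilde{\mathcal{C}}=(B\;(\mathbb{J}_{2n}R)B\;\cdots\;(\mathbb{J}_{2n}R)^{2n-1}B),\qquad \tilde{\mathcal{O}}=\begin{pmatrix}C\\ C(\mathbb{J}_{2n}R)\\ \vdots\\ C(\mathbb{J}_{2n}R)^{2n-1}\end{pmatrix}.$$ Then $\operatorname{Im}\tilde{\mathcal{C}}=\operatorname{Im}\mathcal{C}$ and $\operatorname{Ker}\tilde{\mathcal{O}}=\operatorname{Ker}\mathcal{O}$.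
   Context: $\mathbb{J}_{2k}=\begin{pmatrix}0_{k\times k}& I_k\\ -I_k & 0_{k\times k}\end{pmatrix}$. For a $2r\times 2s$ matrix $X$, $X^{\sharp}=-\mathbb{J}_{2s}X^{\dagger}\mathbb{J}_{2r}$ (for real $X$, $X^{\dagger}=X^{\top}$). A real $2k\times 2k$ matrix $T$ is symplectic if $TT^{\sharp}=T^{\sharp}T=I_{2k}$, equivalently $T^{\top}\mathbb{J}_{2k}T=\mathbb{J}_{2k}$. *)

theory Defs
  imports "Jordan_Normal_Form.Matrix_Kernel"
begin

definition Jmat :: "nat \<Rightarrow> real mat" where
  "Jmat k = four_block_mat (0\<^sub>m k k) (1\<^sub>m k) (- 1\<^sub>m k) (0\<^sub>m k k)"

definition sharp :: "real mat \<Rightarrow> real mat" where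
  "sharp X = - (Jmat (dim_col X div 2) * transpose_mat X * Jmat (dim_row X div 2))"

definition symplectic :: "nat \<Rightarrow> real mat \<Rightarrow> bool" where
  "symplectic k T \<longleftrightarrow> T \<in> carrier_mat (2*k) (2*k) \<and>
     T * sharp T = 1\<^sub>m (2*k) \<and> sharp T * T = 1\<^sub>m (2*k)"

text \<open>Block row (B  AB  ...  A^(N-1) B).\<close>
definition ctrb :: "real mat \<Rightarrow> real mat \<Rightarrow> nat \<Rightarrow> real mat" where
  "ctrb A B N = mat (dim_row B) (N * dim_col B)
     (\<lambda>(i,j). (A ^\<^sub>m (j div dim_col B) * B) $$ (i, j mod dim_col B))"

text \<open>Block column (C; CA; ...; C A^(N-1)).\<close>
definition obsv :: "real mat \<Rightarrow> real mat \<Rightarrow> nat \<Rightarrow> real mat" where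
  "obsv C A N = mat (N * dim_row C) (dim_col C)
     (\<lambda>(i,j). (C * A ^\<^sub>m (i div dim_row C)) $$ (i mod dim_row C, j))"

definition mat_image :: "real mat \<Rightarrow> real vec set" where
  "mat_image M = {M *\<^sub>v x | x. x \<in> carrier_vec (dim_col M)}"

end

theory Submission
  imports Defs
begin

text \<open>
  Write F = J R. Since \<Sigma> \<Sigma>\<sharp> = I, the matrix A = F - C\<sharp> C / 2 arises from F by the state
  feedback A = F + B K with K = \<Sigma>\<sharp> C / 2, and F arises from A by the output injection
  F = A + L C with L = C\<sharp> / 2. The image of the block controllability matrix is the set of
  states reachable from 0 by x \<mapsto> X x + B u, which feedback does not change; the kernel of the
  block observability matrix is the set of states whose outputs C X^k x all vanish, and on
  such states X + L C acts as X.
\<close>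

lemma pow_mat_Suc_left:
  assumes "X \<in> carrier_mat d d"
  shows "X ^\<^sub>m Suc k = X * X ^\<^sub>m k"
proof (induction k)
  case 0 then show ?case using assms by simp
next
  case (Suc k)
  have "X ^\<^sub>m Suc (Suc k) = (X * X ^\<^sub>m k) * X" using Suc by simp
  also have "\<dots> = X * X ^\<^sub>m Suc k" using assms by (simp add: assoc_mult_mat[of X d d _ d X d])
  finally show ?case .
qed

lemma append_vec_dim_0: "dim_vec w = 0 \<Longrightarrow> v @\<^sub>v w = v"
  by (intro eq_vecI) auto

lemma ctrb_carrier: "B \<in> carrier_mat d p \<Longrightarrow> ctrb X B N \<in> carrier_mat d (N * p)"
  by (auto simp: ctrb_def)

lemma obsv_carrier: "C \<in> carrier_mat r d \<Longrightarrow> obsv C X N \<in> carrier_mat (N * r) d"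
  by (auto simp: obsv_def)

lemma ctrb_0 [simp]: "ctrb X B 0 = 0\<^sub>m (dim_row B) 0"
  by (intro eq_matI) (auto simp: ctrb_def)

lemma obsv_0 [simp]: "obsv C X 0 = 0\<^sub>m 0 (dim_col C)"
  by (intro eq_matI) (auto simp: obsv_def)

lemma col_ctrb:
  assumes "X \<in> carrier_mat d d" and "B \<in> carrier_mat d p" and "j < N * p"
  shows "col (ctrb X B N) j = col (X ^\<^sub>m (j div p) * B) (j mod p)"
proof -
  have "0 < p" using assms(3) by (cases p) auto
  then show ?thesis using assms by (intro eq_vecI) (auto simp: ctrb_def)
qed

text \<open>A four-block matrix with empty bottom row serves as horizontal concatenation.\<close>

lemma ctrb_Suc:
  assumes X: "X \<in> carrier_mat d d" and B: "B \<in> carrier_mat d p"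
  shows "ctrb X B (Suc N) = four_block_mat B (X * ctrb X B N) (0\<^sub>m 0 p) (0\<^sub>m 0 (N * p))"
proof (rule eq_matI)
  let ?M = "four_block_mat B (X * ctrb X B N) (0\<^sub>m 0 p) (0\<^sub>m 0 (N * p))"
  fix i j assume i: "i < dim_row ?M" and j: "j < dim_col ?M"
  show "ctrb X B (Suc N) $$ (i, j) = ?M $$ (i, j)"
  proof (cases "j < p")
    case True
    then show ?thesis using i j X B by (simp add: ctrb_def)
  next
    case False
    define j' where "j' = j - p"
    have j': "j' < N * p" and jj: "j = j' + p" using j False B by (auto simp: j'_def)
    have p: "p > 0" using j' by (cases p) auto
    have "ctrb X B (Suc N) $$ (i, j) = (X ^\<^sub>m Suc (j' div p) * B) $$ (i, j' mod p)"
      using i j X B p jj by (simp add: ctrb_def del: pow_mat.simps)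
    also have "\<dots> = (X * (X ^\<^sub>m (j' div p) * B)) $$ (i, j' mod p)"
      using X B
      by (simp add: pow_mat_Suc_left[OF X] assoc_mult_mat[of X d d _ d B p] del: pow_mat.simps)
    also have "\<dots> = row X i \<bullet> col (ctrb X B N) j'"
      using i j' X B p by (simp add: col_ctrb)
    moreover have "dim_row B = d" "dim_col B = p" "dim_col (ctrb X B N) = N * p"
      using B ctrb_carrier[OF B] by auto
    ultimately show ?thesis using i j' jj X by simp
  qed
qed (use B in \<open>auto simp: ctrb_def\<close>)

lemma ctrb_Suc_mult_vec:
  assumes X: "X \<in> carrier_mat d d" and B: "B \<in> carrier_mat d p"
    and u: "u \<in> carrier_vec p" and w: "w \<in> carrier_vec (N * p)"
  shows "ctrb X B (Suc N) *\<^sub>v (u @\<^sub>v w) = B *\<^sub>v u + X *\<^sub>v (ctrb X B N *\<^sub>v w)"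
proof -
  have K: "ctrb X B N \<in> carrier_mat d (N * p)" by (rule ctrb_carrier[OF B])
  have "ctrb X B (Suc N) *\<^sub>v (u @\<^sub>v w) =
      (B *\<^sub>v u + (X * ctrb X B N) *\<^sub>v w) @\<^sub>v (0\<^sub>m 0 p *\<^sub>v u + 0\<^sub>m 0 (N * p) *\<^sub>v w)"
    unfolding ctrb_Suc[OF X B]
    by (rule four_block_mat_mult_vec[OF B mult_carrier_mat[OF X K] _ _ u w]) auto
  also have "\<dots> = B *\<^sub>v u + (X * ctrb X B N) *\<^sub>v w"
    by (simp add: append_vec_dim_0)
  finally show ?thesis by (simp add: assoc_mult_mat_vec[OF X K w])
qed

lemma mat_image_ctrb_Suc:
  assumes X: "X \<in> carrier_mat d d" and B: "B \<in> carrier_mat d p"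
  shows "mat_image (ctrb X B (Suc N)) =
    {B *\<^sub>v u + X *\<^sub>v w | u w. u \<in> carrier_vec p \<and> w \<in> mat_image (ctrb X B N)}"
    (is "_ = ?R")
proof -
  have dims: "dim_col (ctrb X B M) = M * p" for M
    using ctrb_carrier[OF B] by auto
  show ?thesis
  proof (intro equalityI subsetI)
    fix v assume "v \<in> mat_image (ctrb X B (Suc N))"
    then obtain x where x: "x \<in> carrier_vec (p + N * p)" and v: "v = ctrb X B (Suc N) *\<^sub>v x"
      unfolding mat_image_def dims by auto
    have "v = ctrb X B (Suc N) *\<^sub>v (vec_first x p @\<^sub>v vec_last x (N * p))"
      using v vec_first_last_append[OF x] by simp
    also have "\<dots> = B *\<^sub>v vec_first x p + X *\<^sub>v (ctrb X B N *\<^sub>v vec_last x (N * p))"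
      by (rule ctrb_Suc_mult_vec[OF X B vec_first_carrier vec_last_carrier])
    finally show "v \<in> ?R"
      unfolding mat_image_def dims using vec_first_carrier vec_last_carrier by blast
  next
    fix v assume "v \<in> ?R"
    then obtain u w where u: "u \<in> carrier_vec p" and w: "w \<in> carrier_vec (N * p)"
      and v: "v = B *\<^sub>v u + X *\<^sub>v (ctrb X B N *\<^sub>v w)"
      unfolding mat_image_def dims by blast
    then have "v = ctrb X B (Suc N) *\<^sub>v (u @\<^sub>v w)" by (simp add: ctrb_Suc_mult_vec[OF X B])
    then show "v \<in> mat_image (ctrb X B (Suc N))"
      unfolding mat_image_def dims using u w by (auto intro: append_carrier_vec)
  qed
qed

lemma mat_image_ctrb_feedback_subset:
  assumes X: "X \<in> carrier_mat d d" and B: "B \<in> carrier_mat d p" and K: "K \<in> carrier_mat p d"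
  shows "mat_image (ctrb (X + B * K) B N) \<subseteq> mat_image (ctrb X B N)"
proof (induction N)
  case 0
  show ?case by simp
next
  case (Suc N)
  have XBK: "X + B * K \<in> carrier_mat d d" using X B K by simp
  show ?case
  proof
    fix v assume "v \<in> mat_image (ctrb (X + B * K) B (Suc N))"
    then obtain u w where u: "u \<in> carrier_vec p" and w: "w \<in> mat_image (ctrb X B N)"
      and v: "v = B *\<^sub>v u + (X + B * K) *\<^sub>v w"
      using Suc.IH unfolding mat_image_ctrb_Suc[OF XBK B] by blast
    have wd: "w \<in> carrier_vec d"
      using w ctrb_carrier[OF B, of X N] unfolding mat_image_def by auto
    have "v = B *\<^sub>v u + (B *\<^sub>v (K *\<^sub>v w) + X *\<^sub>v w)"
      using X B K u wd by (simp add: v add_mult_distrib_mat_vec comm_add_vec[of "X *\<^sub>v w" d])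
    also have "\<dots> = B *\<^sub>v (u + K *\<^sub>v w) + X *\<^sub>v w"
      using X B K u wd by (simp add: mult_add_distrib_mat_vec assoc_add_vec[of _ d])
    finally have "v = B *\<^sub>v (u + K *\<^sub>v w) + X *\<^sub>v w" .
    moreover have "u + K *\<^sub>v w \<in> carrier_vec p" using u K wd by simp
    ultimately show "v \<in> mat_image (ctrb X B (Suc N))"
      unfolding mat_image_ctrb_Suc[OF X B] using w by blast
  qed
qed

lemma mat_image_ctrb_feedback:
  assumes X: "X \<in> carrier_mat d d" and B: "B \<in> carrier_mat d p" and K: "K \<in> carrier_mat p d"
  shows "mat_image (ctrb (X + B * K) B N) = mat_image (ctrb X B N)"
proof
  have "X = (X + B * K) + B * (- K)"
    using X B K by (intro eq_matI) auto
  then show "mat_image (ctrb X B N) \<subseteq> mat_image (ctrb (X + B * K) B N)"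
    using mat_image_ctrb_feedback_subset[of "X + B * K" d B p "- K" N] X B K by simp
qed (rule mat_image_ctrb_feedback_subset[OF X B K])

lemma row_obsv:
  assumes C: "C \<in> carrier_mat r d" and X: "X \<in> carrier_mat d d" and i: "i < N * r"
  shows "row (obsv C X N) i = row (C * X ^\<^sub>m (i div r)) (i mod r)"
proof (rule eq_vecI)
  have "0 < r" using i by (cases r) auto
  then have "i mod r < r" by simp
  moreover fix k assume "k < dim_vec (row (C * X ^\<^sub>m (i div r)) (i mod r))"
  then have "k < d" using C X by (simp split: if_splits)
  ultimately show "row (obsv C X N) i $ k = row (C * X ^\<^sub>m (i div r)) (i mod r) $ k"
    using C X i by (simp add: obsv_def)
qed (use C X in \<open>simp add: obsv_def\<close>)

lemma obsv_Suc:
  assumes C: "C \<in> carrier_mat r d" and X: "X \<in> carrier_mat d d"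
  shows "obsv C X (Suc N) = C @\<^sub>r (obsv C X N * X)"
proof -
  have M: "obsv C X N * X \<in> carrier_mat (N * r) d"
    using obsv_carrier[OF C] X by (rule mult_carrier_mat)
  have Z: "0\<^sub>m r 0 \<in> carrier_mat r 0" "0\<^sub>m (N * r) 0 \<in> carrier_mat (N * r) 0" by auto
  have concat:
    "C @\<^sub>r (obsv C X N * X) = four_block_mat C (0\<^sub>m r 0) (obsv C X N * X) (0\<^sub>m (N * r) 0)"
    unfolding append_rows_def using C obsv_carrier[OF C, of X N] by simp
  note rows = row_four_block_mat[OF C Z(1) M Z(2)]
  have dims: "dim_row (obsv C X (Suc N)) = r + N * r" "dim_col (obsv C X (Suc N)) = d"
    "dim_row (C @\<^sub>r (obsv C X N * X)) = r + N * r" "dim_col (C @\<^sub>r (obsv C X N * X)) = d"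
    using obsv_carrier[OF C, of X "Suc N"] carrier_append_rows[OF C M] by auto
  show ?thesis
  proof (rule eq_rowI)
    fix i assume "i < dim_row (C @\<^sub>r (obsv C X N * X))"
    then have i: "i < r + N * r" by (simp only: dims)
    show "row (obsv C X (Suc N)) i = row (C @\<^sub>r (obsv C X N * X)) i"
    proof (cases "i < r")
      case True
      have "row (obsv C X (Suc N)) i = row (C * X ^\<^sub>m 0) i"
        using row_obsv[OF C X, of i "Suc N"] True by simp
      also have "\<dots> = row C i" using C X by simp
      finally show ?thesis unfolding concat rows(1)[OF True] by (simp add: append_vec_dim_0)
    next
      case False
      define i' where "i' = i - r"
      have i': "i' < N * r" and ii: "i = i' + r" using i False by (auto simp: i'_def)
      have r: "r > 0" using i' by (cases r) auto
      have "row (obsv C X (Suc N)) i = row (C * X ^\<^sub>m (i' div r) * X) (i' mod r)"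
        using row_obsv[OF C X, of i "Suc N"] i ii r
          assoc_mult_mat[OF C pow_carrier_mat[OF X, of "i' div r"] X] by simp
      also have "\<dots> = row (obsv C X N * X) i'"
        using row_mult[OF mult_carrier_mat[OF C pow_carrier_mat[OF X]] X, of "i' mod r"] r
          row_mult[OF obsv_carrier[OF C] X i'] by (simp add: row_obsv[OF C X i'])
      finally show ?thesis
        unfolding concat rows(2)[OF False i] using ii by (simp add: append_vec_dim_0)
    qed
  qed (simp_all only: dims)
qed

lemma obsv_Suc_mult_vec:
  assumes C: "C \<in> carrier_mat r d" and X: "X \<in> carrier_mat d d" and x: "x \<in> carrier_vec d"
  shows "obsv C X (Suc N) *\<^sub>v x = (C *\<^sub>v x) @\<^sub>v (obsv C X N *\<^sub>v (X *\<^sub>v x))"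
proof -
  have O: "obsv C X N \<in> carrier_mat (N * r) d" by (rule obsv_carrier[OF C])
  have "obsv C X (Suc N) *\<^sub>v x = (C *\<^sub>v x) @\<^sub>v ((obsv C X N * X) *\<^sub>v x)"
    unfolding obsv_Suc[OF C X] by (rule mat_mult_append[OF C mult_carrier_mat[OF O X] x])
  then show ?thesis by (simp add: assoc_mult_mat_vec[OF O X x])
qed

lemma mat_kernel_obsv_Suc:
  assumes C: "C \<in> carrier_mat r d" and X: "X \<in> carrier_mat d d"
  shows "mat_kernel (obsv C X (Suc N)) =
    {x \<in> carrier_vec d. C *\<^sub>v x = 0\<^sub>v r \<and> X *\<^sub>v x \<in> mat_kernel (obsv C X N)}"
proof -
  have "obsv C X (Suc N) *\<^sub>v x = 0\<^sub>v (Suc N * r) \<longleftrightarrow>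
      C *\<^sub>v x = 0\<^sub>v r \<and> obsv C X N *\<^sub>v (X *\<^sub>v x) = 0\<^sub>v (N * r)" if x: "x \<in> carrier_vec d" for x
  proof -
    have "0\<^sub>v (Suc N * r) = 0\<^sub>v r @\<^sub>v (0\<^sub>v (N * r) :: real vec)" by auto
    then show ?thesis
      using append_vec_eq[OF mult_mat_vec_carrier[OF C x] zero_carrier_vec]
      by (simp add: obsv_Suc_mult_vec[OF C X x])
  qed
  moreover have "dim_row (obsv C X M) = M * r" "dim_col (obsv C X M) = d" for M
    using obsv_carrier[OF C] by auto
  ultimately show ?thesis using X by (auto simp: mat_kernel_def)
qed

lemma mat_kernel_obsv_output_injection:
  assumes C: "C \<in> carrier_mat r d" and X: "X \<in> carrier_mat d d" and L: "L \<in> carrier_mat d r"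
  shows "mat_kernel (obsv C (X + L * C) N) = mat_kernel (obsv C X N)"
proof (induction N)
  case 0
  show ?case by simp
next
  case (Suc N)
  have "(X + L * C) *\<^sub>v x = X *\<^sub>v x" if x: "x \<in> carrier_vec d" and Cx: "C *\<^sub>v x = 0\<^sub>v r" for x
  proof -
    have "L *\<^sub>v (C *\<^sub>v x) = 0\<^sub>v d" unfolding Cx using L by (intro eq_vecI) auto
    then show ?thesis using X L C x by (simp add: add_mult_distrib_mat_vec)
  qed
  moreover have "X + L * C \<in> carrier_mat d d" using X L C by simp
  ultimately show ?case
    using Suc.IH by (auto simp: mat_kernel_obsv_Suc[OF C] mat_kernel_obsv_Suc[OF C X])
qed

lemma Jmat_carrier: "Jmat k \<in> carrier_mat (2 * k) (2 * k)"
  unfolding Jmat_def mult_2 by (rule four_block_carrier_mat) auto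

lemma sharp_carrier:
  assumes "X \<in> carrier_mat (2 * r) (2 * s)"
  shows "sharp X \<in> carrier_mat (2 * s) (2 * r)"
  using assms Jmat_carrier[of r] Jmat_carrier[of s] by (auto simp: sharp_def)

theorem lemma1:
  fixes n m :: nat and R C \<Sigma> :: "real mat"
  assumes "n \<ge> 1" and "m \<ge> 1"
    and "R \<in> carrier_mat (2*n) (2*n)" and "transpose_mat R = R"
    and "C \<in> carrier_mat (2*m) (2*n)"
    and "symplectic m \<Sigma>"
  shows "let A = Jmat n * R - (1/2) \<cdot>\<^sub>m (sharp C * C);
             B = - (sharp C * \<Sigma>)
         in mat_image (ctrb (Jmat n * R) B (2*n)) = mat_image (ctrb A B (2*n))
          \<and> mat_kernel (obsv C (Jmat n * R) (2*n)) = mat_kernel (obsv C A (2*n))"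
proof -
  define F where "F = Jmat n * R"
  define A where "A = F - (1/2) \<cdot>\<^sub>m (sharp C * C)"
  define B where "B = - (sharp C * \<Sigma>)"
  have C: "C \<in> carrier_mat (2*m) (2*n)" and C': "sharp C \<in> carrier_mat (2*n) (2*m)"
    using assms(5) by (auto intro: sharp_carrier)
  have \<Sigma>: "\<Sigma> \<in> carrier_mat (2*m) (2*m)" and \<Sigma>': "sharp \<Sigma> \<in> carrier_mat (2*m) (2*m)"
    and \<Sigma>\<Sigma>': "\<Sigma> * sharp \<Sigma> = 1\<^sub>m (2*m)"
    using assms(6) sharp_carrier by (auto simp: symplectic_def)
  have F: "F \<in> carrier_mat (2*n) (2*n)"
    unfolding F_def using Jmat_carrier assms(3) by (rule mult_carrier_mat)
  have B: "B \<in> carrier_mat (2*n) (2*m)" using C' \<Sigma> by (simp add: B_def)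
  define K where "K = (1/2) \<cdot>\<^sub>m (sharp \<Sigma> * C)"
  have "B * K = - ((sharp C * \<Sigma>) * K)"
    unfolding B_def by (rule uminus_mult_left_mat) (use C' \<Sigma> \<Sigma>' C in \<open>simp add: K_def\<close>)
  also have "\<dots> = - ((1/2) \<cdot>\<^sub>m ((sharp C * \<Sigma>) * (sharp \<Sigma> * C)))"
    unfolding K_def
    by (simp add: mult_smult_distrib[OF mult_carrier_mat[OF C' \<Sigma>] mult_carrier_mat[OF \<Sigma>' C]])
  also have "(sharp C * \<Sigma>) * (sharp \<Sigma> * C) = sharp C * C"
    using assoc_mult_mat[OF C' \<Sigma> mult_carrier_mat[OF \<Sigma>' C]] assoc_mult_mat[OF \<Sigma> \<Sigma>' C] C
    by (simp add: \<Sigma>\<Sigma>')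
  finally have feedback: "A = F + B * K" using F C C' by (intro eq_matI) (auto simp: A_def)
  have injection: "F = A + ((1/2) \<cdot>\<^sub>m sharp C) * C"
    using F C C' by (intro eq_matI) (auto simp: A_def)
  have K: "K \<in> carrier_mat (2*m) (2*n)" using \<Sigma>' C by (simp add: K_def)
  have A: "A \<in> carrier_mat (2*n) (2*n)"
    unfolding A_def using mult_carrier_mat[OF C' C] by (intro minus_carrier_mat smult_carrier_mat)
  have "mat_image (ctrb F B N) = mat_image (ctrb A B N)" for N
    unfolding feedback mat_image_ctrb_feedback[OF F B K] ..
  moreover have "mat_kernel (obsv C F N) = mat_kernel (obsv C A N)" for N
    unfolding injection using C' by (intro mat_kernel_obsv_output_injection[OF C A]) simp
  ultimately show ?thesis by (simp add: F_def A_def B_def)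
qed

end
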